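(* Let $(Q,\rightarrow)$ be a finite transition system, $\mathscr{R}$ a preorder on $Q$ and $\mathscr{P}\subseteq\mathscr{R}$ an equivalence relation. Then the following are equivalent: (i) for all $b,d,d'\in Q$ with $d\,\mathscr{P}\,d'$: $d\in\rightarrow^{-1}(\mathscr{R}(b))\iff d'\in\rightarrow^{-1}(\mathscr{R}(b))$; (ii) $\mathscr{P}\circ\rightarrow_{\mathscr{R}}^{-1}\subseteq\rightarrow^{-1}\circ[\cdot]_{\mathscr{R}}$, i.e. whenever $c\,\mathscr{P}\,d$ and $c\rightarrow_{\mathscr{R}} c'$, there is $d'\in[c']_{\mathscr{R}}$ with $d\rightarrow d'$.
   Context: $\mathscr{R}(X)=\{q'\mid\exists q\in X.\ q\,\mathscr{R}\,q'\}$, $\rightarrow^{-1}(Y)=\{q\mid\exists y\in Y.\ q\rightarrow y\}$, $\mathscr{S}\circ\mathscr{R}=\{(x,y)\mid\exists z.\ x\,\mathscr{R}\,z\wedge z\,\mathscr{S}\,y\}$. A preorder is a reflexive transitive relation; $[q]_{\mathscr{R}}=\{q'\mid q\,\mathscr{R}\,q'\wedge q'\,\mathscr{R}\,q\}$ and $[\cdot]_{\mathscr{R}}=\bigcup_{q\in Q}\{q\}\times[q]_{\mathscr{R}}$. A transition $q\rightarrow q'$ is $\mathscr{R}$-maximal, $q\rightarrow_{\mathscr{R}}q'$, if for all $q''$, ($q\rightarrow q''$ and $q'\,\mathscr{R}\,q''$) implies $q''\in[q']_{\mathscr{R}}$. *)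

theory Defs
  imports Main
begin

definition eqclass :: "('a \<times> 'a) set \<Rightarrow> 'a \<Rightarrow> 'a set" where
  "eqclass R q = {q'. (q, q') \<in> R \<and> (q', q) \<in> R}"

definition eqrel :: "'a set \<Rightarrow> ('a \<times> 'a) set \<Rightarrow> ('a \<times> 'a) set" where
  "eqrel Q R = (\<Union>q\<in>Q. {q} \<times> eqclass R q)"

definition max_trans :: "('a \<times> 'a) set \<Rightarrow> ('a \<times> 'a) set \<Rightarrow> ('a \<times> 'a) set" where
  "max_trans T R = {(q, q'). (q, q') \<in> T \<and>
      (\<forall>q''. (q, q'') \<in> T \<and> (q', q'') \<in> R \<longrightarrow> q'' \<in> eqclass R q')}"

end

theory Submission
  imports Defs
begin

text \<open>For (i) \<Longrightarrow> (ii), a maximal step \<open>c \<rightarrow> c'\<close> is matched by \<open>d \<rightarrow> d'\<close> with \<open>c' R d'\<close>, and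
  matching back gives \<open>c \<rightarrow> c''\<close> with \<open>d' R c''\<close>; maximality forces \<open>c''\<close>, hence \<open>d'\<close>, into
  \<open>[c']_R\<close>. For (ii) \<Longrightarrow> (i), finiteness lets every step \<open>d \<rightarrow> x\<close> be dominated by an
  R-maximal step \<open>d \<rightarrow> m\<close> with \<open>x R m\<close>, to which (ii) applies.\<close>

lemma finite_preorder_has_maximal_above:
  assumes "finite S" and "trans R" and "x \<in> S" and "\<And>y. y \<in> S \<Longrightarrow> (y, y) \<in> R"
  shows "\<exists>m\<in>S. (x, m) \<in> R \<and> (\<forall>z\<in>S. (m, z) \<in> R \<longrightarrow> (z, m) \<in> R)"
proof -
  define below where "below m = card {z\<in>S. (z, m) \<in> R}" for m
  obtain m where m: "m \<in> S" "(x, m) \<in> R"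
    and greatest: "\<And>y. y \<in> S \<Longrightarrow> (x, y) \<in> R \<Longrightarrow> below y \<le> below m"
  proof -
    have "\<exists>m. (m \<in> S \<and> (x, m) \<in> R) \<and> (\<forall>y. y \<in> S \<and> (x, y) \<in> R \<longrightarrow> below y \<le> below m)"
    proof (rule ex_has_greatest_nat[where b = "card S + 1"])
      show "x \<in> S \<and> (x, x) \<in> R" using assms(3,4) by simp
      show "\<forall>y. y \<in> S \<and> (x, y) \<in> R \<longrightarrow> below y < card S + 1"
        using assms(1) by (auto simp: below_def intro!: le_imp_less_Suc card_mono)
    qed
    then show thesis using that by blast
  qed
  have "(z, m) \<in> R" if z: "z \<in> S" "(m, z) \<in> R" for z
  proof (rule ccontr)
    assume "(z, m) \<notin> R"
    then have "{w\<in>S. (w, m) \<in> R} \<subset> {w\<in>S. (w, z) \<in> R}"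
      using z assms(2,4) by (auto dest: transD)
    then have "below m < below z"
      unfolding below_def using assms(1) by (intro psubset_card_mono) auto
    moreover have "(x, z) \<in> R" using m(2) z(2) assms(2) by (meson transD)
    ultimately show False using greatest[OF z(1)] by simp
  qed
  with m show ?thesis by blast
qed

lemma max_trans_dominates:
  assumes "finite (T `` {d})" and "trans R" and "\<And>y. (d, y) \<in> T \<Longrightarrow> (y, y) \<in> R"
    and "(d, x) \<in> T"
  shows "\<exists>m. (d, m) \<in> max_trans T R \<and> (x, m) \<in> R"
proof -
  obtain m where "m \<in> T `` {d}" "(x, m) \<in> R"
    and "\<forall>z\<in>T `` {d}. (m, z) \<in> R \<longrightarrow> (z, m) \<in> R"
    using finite_preorder_has_maximal_above[OF assms(1,2), of x] assms(3,4) by auto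
  then show ?thesis by (auto simp: max_trans_def eqclass_def)
qed

lemma max_trans_matched_if_simulation:
  assumes "T \<subseteq> Q \<times> Q" and "preorder_on Q R" and "sym P" and "P \<subseteq> Q \<times> Q"
    and sim: "\<forall>b\<in>Q. \<forall>d\<in>Q. \<forall>d'\<in>Q. (d, d') \<in> P \<longrightarrow>
            (d \<in> T\<inverse> `` (R `` {b}) \<longleftrightarrow> d' \<in> T\<inverse> `` (R `` {b}))"
  shows "(max_trans T R)\<inverse> O P \<subseteq> eqrel Q R O T\<inverse>"
proof clarsimp
  fix c' c d assume max: "(c, c') \<in> max_trans T R" and "(c, d) \<in> P"
  have refl: "\<And>q. q \<in> Q \<Longrightarrow> (q, q) \<in> R" and "trans R"
    using assms(2) by (auto simp: preorder_on_def refl_on_def)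
  have step: "(c, c') \<in> T"
    and maximal: "\<And>c''. (c, c'') \<in> T \<Longrightarrow> (c', c'') \<in> R \<Longrightarrow> c'' \<in> eqclass R c'"
    using max by (auto simp: max_trans_def)
  have "c \<in> Q" "c' \<in> Q" "d \<in> Q" using step \<open>(c, d) \<in> P\<close> assms(1,4) by auto
  have "c \<in> T\<inverse> `` (R `` {c'})" using step refl[OF \<open>c' \<in> Q\<close>] by auto
  then have "d \<in> T\<inverse> `` (R `` {c'})" using sim \<open>(c, d) \<in> P\<close> \<open>c \<in> Q\<close> \<open>c' \<in> Q\<close> \<open>d \<in> Q\<close> by blast
  then obtain d' where d': "(d, d') \<in> T" "(c', d') \<in> R" by auto
  have "d' \<in> Q" using d'(1) assms(1) by auto
  have "d \<in> T\<inverse> `` (R `` {d'})" using d'(1) refl[OF \<open>d' \<in> Q\<close>] by auto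
  moreover have "(d, c) \<in> P" using \<open>(c, d) \<in> P\<close> assms(3) by (auto dest: symD)
  ultimately have "c \<in> T\<inverse> `` (R `` {d'})" using sim \<open>c \<in> Q\<close> \<open>d \<in> Q\<close> \<open>d' \<in> Q\<close> by blast
  then obtain c'' where c'': "(c, c'') \<in> T" "(d', c'') \<in> R" by auto
  have "(c', c'') \<in> R" using d'(2) c''(2) \<open>trans R\<close> by (meson transD)
  then have "(c'', c') \<in> R" using maximal[OF c''(1)] by (auto simp: eqclass_def)
  then have "(d', c') \<in> R" using c''(2) \<open>trans R\<close> by (meson transD)
  then have "(c', d') \<in> eqrel Q R" using \<open>c' \<in> Q\<close> d'(2) by (auto simp: eqrel_def eqclass_def)
  with d'(1) show "(c', d) \<in> eqrel Q R O T\<inverse>" by auto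
qed

lemma simulation_if_max_trans_matched:
  assumes "finite Q" and "T \<subseteq> Q \<times> Q" and "preorder_on Q R" and "sym P"
    and matched: "(max_trans T R)\<inverse> O P \<subseteq> eqrel Q R O T\<inverse>"
  shows "\<forall>b\<in>Q. \<forall>d\<in>Q. \<forall>d'\<in>Q. (d, d') \<in> P \<longrightarrow>
            (d \<in> T\<inverse> `` (R `` {b}) \<longleftrightarrow> d' \<in> T\<inverse> `` (R `` {b}))"
proof -
  have refl: "\<And>q. q \<in> Q \<Longrightarrow> (q, q) \<in> R" and "trans R"
    using assms(3) by (auto simp: preorder_on_def refl_on_def)
  have one_way: "d' \<in> T\<inverse> `` (R `` {b})"
    if related: "(d, d') \<in> P" and reach: "d \<in> T\<inverse> `` (R `` {b})" for b d d'
  proof -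
    obtain x where x: "(d, x) \<in> T" "(b, x) \<in> R" using reach by auto
    have "finite (T `` {d})" using assms(1,2) by (auto intro: finite_subset)
    then obtain m where m: "(d, m) \<in> max_trans T R" "(x, m) \<in> R"
      using max_trans_dominates[OF _ \<open>trans R\<close> _ x(1)] refl assms(2) by blast
    then have "(m, d') \<in> eqrel Q R O T\<inverse>" using related matched by blast
    then obtain y where "(m, y) \<in> R" "(d', y) \<in> T" by (auto simp: eqrel_def eqclass_def)
    moreover have "(b, y) \<in> R" using x(2) m(2) \<open>(m, y) \<in> R\<close> \<open>trans R\<close> by (meson transD)
    ultimately show ?thesis by auto
  qed
  show ?thesis using one_way assms(4) by (meson symD)
qed

theorem lemma5:
  fixes Q :: "'a set" and T R P :: "('a \<times> 'a) set"
  assumes "finite Q" and "T \<subseteq> Q \<times> Q"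
    and "preorder_on Q R"
    and "equiv Q P" and "P \<subseteq> R"
  shows "(\<forall>b\<in>Q. \<forall>d\<in>Q. \<forall>d'\<in>Q. (d, d') \<in> P \<longrightarrow>
            (d \<in> T\<inverse> `` (R `` {b}) \<longleftrightarrow> d' \<in> T\<inverse> `` (R `` {b})))
         \<longleftrightarrow> ((max_trans T R)\<inverse> O P \<subseteq> eqrel Q R O T\<inverse>)"
proof -
  have "sym P" and "P \<subseteq> Q \<times> Q" using assms(4) by (auto simp: equiv_def refl_on_def)
  show ?thesis
    using max_trans_matched_if_simulation[OF assms(2,3) \<open>sym P\<close> \<open>P \<subseteq> Q \<times> Q\<close>]
      simulation_if_max_trans_matched[OF assms(1-3) \<open>sym P\<close>] by (rule iffI)
qed

end
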